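(* Let $M$ be a $3$-connected matroid, let $\mathcal{T}$ be a tangle of $M$, and let $C,D$ be disjoint subsets of $E(M)$ such that $C\cup D$ is independent in the tangle matroid $M(\mathcal{T})$ and $M/C\setminus D$ is $3$-connected. Then for each $d\in D$, either $M/C\setminus(D\setminus d)$ is $3$-connected or there is an element $c\in C$ such that $M/(C\setminus c)\setminus(D\setminus d)$ is $3$-connected.
   Context: $\lambda_M(X) = \rank_M(X) + \rank_M(E(M)\setminus X) - \rank(M)$. A tangle of order $\theta$ of $M$ is a collection $\mathcal{T}$ of subsets of $E(M)$ such that: (i) $\lambda_M(X)<\theta$ for all $X\in\mathcal{T}$; (ii) for every $X\subseteq E(M)$ with $\lambda_M(X)<\theta$, either $X\in\mathcal{T}$ or $E(M)\setminus X\in\mathcal{T}$; (iii) if $X,Y,Z\in\mathcal{T}$ then $X\cup Y\cup Z\neq E(M)$; (iv) $E(M)\setminus\{e\}\notin\mathcal{T}$ for every $e\in E(M)$. The tangle matroid $M(\mathcal{T})$ has rank function $\rank_{\mathcal{T}}(X) = \min\{\lambda_M(Y): X\subseteq Y\in\mathcal{T}\}$ if some member of $\mathcal{T}$ contains $X$, and $\theta$ otherwise. *)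

theory Defs
  imports Main
begin

definition matroid :: "'a set \<Rightarrow> ('a set \<Rightarrow> nat) \<Rightarrow> bool" where
  "matroid E r \<longleftrightarrow> finite E
     \<and> (\<forall>X. X \<subseteq> E \<longrightarrow> r X \<le> card X)
     \<and> (\<forall>X Y. X \<subseteq> Y \<and> Y \<subseteq> E \<longrightarrow> r X \<le> r Y)
     \<and> (\<forall>X Y. X \<subseteq> E \<and> Y \<subseteq> E \<longrightarrow> r (X \<union> Y) + r (X \<inter> Y) \<le> r X + r Y)"

definition conn_fn :: "'a set \<Rightarrow> ('a set \<Rightarrow> nat) \<Rightarrow> 'a set \<Rightarrow> nat" where
  "conn_fn E r X = r X + r (E - X) - r E"

text \<open>Rank function of the minor M / C \ D (on ground set E - C - D):
  X maps to r(X union C) - r(C).\<close>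
definition contr_rank :: "('a set \<Rightarrow> nat) \<Rightarrow> 'a set \<Rightarrow> 'a set \<Rightarrow> nat" where
  "contr_rank r C X = r (X \<union> C) - r C"

definition k_separation :: "'a set \<Rightarrow> ('a set \<Rightarrow> nat) \<Rightarrow> nat \<Rightarrow> 'a set \<Rightarrow> bool" where
  "k_separation E r k X \<longleftrightarrow> X \<subseteq> E \<and> card X \<ge> k \<and> card (E - X) \<ge> k \<and> conn_fn E r X < k"

definition n_connected :: "nat \<Rightarrow> 'a set \<Rightarrow> ('a set \<Rightarrow> nat) \<Rightarrow> bool" where
  "n_connected n E r \<longleftrightarrow> matroid E r \<and> (\<forall>k X. 1 \<le> k \<and> k < n \<longrightarrow> \<not> k_separation E r k X)"

abbreviation three_connected :: "'a set \<Rightarrow> ('a set \<Rightarrow> nat) \<Rightarrow> bool" where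
  "three_connected E r \<equiv> n_connected 3 E r"

definition is_tangle :: "'a set \<Rightarrow> ('a set \<Rightarrow> nat) \<Rightarrow> 'a set set \<Rightarrow> nat \<Rightarrow> bool" where
  "is_tangle E r T \<theta> \<longleftrightarrow>
     T \<subseteq> Pow E
   \<and> (\<forall>X\<in>T. conn_fn E r X < \<theta>)
   \<and> (\<forall>X. X \<subseteq> E \<and> conn_fn E r X < \<theta> \<longrightarrow> X \<in> T \<or> E - X \<in> T)
   \<and> (\<forall>X\<in>T. \<forall>Y\<in>T. \<forall>Z\<in>T. X \<union> Y \<union> Z \<noteq> E)
   \<and> (\<forall>e\<in>E. E - {e} \<notin> T)"

definition tangle_rank :: "'a set \<Rightarrow> ('a set \<Rightarrow> nat) \<Rightarrow> 'a set set \<Rightarrow> nat \<Rightarrow> 'a set \<Rightarrow> nat" where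
  "tangle_rank E r T \<theta> X =
     (if \<exists>Y\<in>T. X \<subseteq> Y then Min {conn_fn E r Y | Y. Y \<in> T \<and> X \<subseteq> Y} else \<theta>)"

definition tangle_indep :: "'a set \<Rightarrow> ('a set \<Rightarrow> nat) \<Rightarrow> 'a set set \<Rightarrow> nat \<Rightarrow> 'a set \<Rightarrow> bool" where
  "tangle_indep E r T \<theta> X \<longleftrightarrow> X \<subseteq> E \<and> tangle_rank E r T \<theta> X = card X"

end

theory Submission
  imports Defs
begin

text \<open>Let \<open>N = M/C\(D - d)\<close>. If \<open>N\<close> is not 3-connected, then, since \<open>M/C\D\<close> is 3-connected and
  tangle-independence gives \<open>\<lambda>(C \<union> D) = |C \<union> D|\<close>, a 2-separation of \<open>N\<close> must be \<open>{d, e}\<close> for some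
  \<open>e \<notin> C \<union> D\<close>, with \<open>r(C + e) = r(C + d + e) = |C| + 1\<close>. A minimal \<open>K \<subseteq> C\<close> over which \<open>d, e\<close>
  are dependent is nonempty because \<open>M\<close> is 3-connected, and any \<open>c \<in> K\<close> can be released from \<open>C\<close>
  keeping \<open>d, e\<close> dependent. Then \<open>M/(C - c)\(D - d)\<close> is 3-connected: a low-order separation of it
  restricts to one of \<open>M/C\D\<close> unless one side has at most one element outside \<open>{c, d}\<close>, and such
  small sides are ruled out case by case. The key fact is that adding at most one element to
  \<open>C \<union> D\<close> keeps the connectivity at least \<open>|C \<union> D|\<close>: otherwise the enlarged set, the union of
  two sets of size \<open>< \<theta>\<close>, would lie in the tangle, contradicting tangle-independence.\<close>

locale rank_matroid =
  fixes E :: "'a set" and r :: "'a set \<Rightarrow> nat"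
  assumes matroid: "matroid E r"
begin

lemma finite_ground: "finite E"
  using matroid unfolding matroid_def by blast

lemma rank_le_card: "X \<subseteq> E \<Longrightarrow> r X \<le> card X"
  using matroid unfolding matroid_def by blast

lemma rank_mono: "X \<subseteq> Y \<Longrightarrow> Y \<subseteq> E \<Longrightarrow> r X \<le> r Y"
  using matroid unfolding matroid_def by blast

lemma rank_submod:
  "X \<subseteq> E \<Longrightarrow> Y \<subseteq> E \<Longrightarrow> X \<union> Y = U \<Longrightarrow> X \<inter> Y = I \<Longrightarrow> r U + r I \<le> r X + r Y"
  using matroid unfolding matroid_def by blast

lemma rank_empty: "r {} = 0"
  using rank_le_card[of "{}"] by simp

lemma rank_insert_le: "X \<subseteq> E \<Longrightarrow> x \<in> E \<Longrightarrow> r (insert x X) \<le> r X + 1"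
  using rank_submod[of X "{x}" "insert x X" "X \<inter> {x}"] rank_le_card[of "{x}"] by auto

lemma rank_Un_le_card: "X \<subseteq> E \<Longrightarrow> Z \<subseteq> E \<Longrightarrow> r (X \<union> Z) \<le> r X + card Z"
proof -
  assume X: "X \<subseteq> E" and Z: "Z \<subseteq> E"
  from Z have "finite Z" using finite_ground finite_subset by blast
  then show ?thesis using Z
  proof (induction Z rule: finite_induct)
    case (insert a F)
    have "r (X \<union> insert a F) \<le> r (X \<union> F) + 1"
      using rank_insert_le[of "X \<union> F" a] X insert.prems by simp
    then show ?case using insert by simp
  qed simp
qed

lemma indep_subset: "W \<subseteq> E \<Longrightarrow> r W = card W \<Longrightarrow> V \<subseteq> W \<Longrightarrow> r V = card V"
proof -
  assume W: "W \<subseteq> E" "r W = card W" and V: "V \<subseteq> W"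
  have "finite W" using W finite_ground finite_subset by blast
  have "r W \<le> r V + card (W - V)"
    using rank_Un_le_card[of V "W - V"] W V by (auto simp: Un_absorb1 sup.absorb2)
  moreover have "card W = card V + card (W - V)"
    using \<open>finite W\<close> V by (metis card_Diff_subset card_mono finite_subset le_add_diff_inverse)
  moreover have "r V \<le> card V" using rank_le_card V W by auto
  ultimately show ?thesis using W by linarith
qed

lemma spanned_mono:
  "S \<subseteq> U \<Longrightarrow> U \<subseteq> E \<Longrightarrow> a \<in> E \<Longrightarrow> r (insert a S) = r S \<Longrightarrow> r (insert a U) = r U"
proof (cases "a \<in> U")
  case False
  assume "S \<subseteq> U" "U \<subseteq> E" "a \<in> E" "r (insert a S) = r S"
  moreover have "r (insert a U) + r S \<le> r (insert a S) + r U"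
    using calculation False by (intro rank_submod) auto
  moreover have "r U \<le> r (insert a U)" using rank_mono[of U "insert a U"] calculation by auto
  ultimately show ?thesis by linarith
qed (simp add: insert_absorb)

lemma conn_add_rank: "X \<subseteq> E \<Longrightarrow> conn_fn E r X + r E = r X + r (E - X)"
  using rank_submod[of X "E - X" E "{}"] rank_empty unfolding conn_fn_def by force

lemma conn_le_rank: "X \<subseteq> E \<Longrightarrow> conn_fn E r X \<le> r X"
  using conn_add_rank[of X] rank_mono[of "E - X" E] by auto

lemma conn_le_card: "X \<subseteq> E \<Longrightarrow> conn_fn E r X \<le> card X"
  using conn_le_rank rank_le_card le_trans by blast

lemma conn_compl: "X \<subseteq> E \<Longrightarrow> conn_fn E r (E - X) = conn_fn E r X"
  unfolding conn_fn_def by (simp add: Diff_Diff_Int inf.absorb2 add.commute)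

lemma three_connected_conn_ge:
  assumes "three_connected E r" "X \<subseteq> E" "2 \<le> card X" "2 \<le> card (E - X)"
  shows "2 \<le> conn_fn E r X"
proof -
  have "\<not> k_separation E r 2 X" using assms(1) unfolding n_connected_def by auto
  then show ?thesis using assms(2-4) unfolding k_separation_def by auto
qed

end

text \<open>The connectivity function of \<open>M/C\D\<close>, taken in \<open>int\<close> to avoid truncated subtraction;
  it agrees with \<open>conn_fn\<close> by \<open>conn_minor\<close>.\<close>
definition minor_conn :: "'a set \<Rightarrow> ('a set \<Rightarrow> nat) \<Rightarrow> 'a set \<Rightarrow> 'a set \<Rightarrow> 'a set \<Rightarrow> int" where
  "minor_conn E r C D X =
     int (r (X \<union> C)) + int (r ((E - C - D - X) \<union> C)) - int (r C) - int (r (E - D))"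

context rank_matroid
begin

lemma contr_rank_empty: "contr_rank r {} = r"
  unfolding contr_rank_def using rank_empty by (simp add: fun_eq_iff)

lemma matroid_minor: "C \<subseteq> E \<Longrightarrow> matroid (E - C - D) (contr_rank r C)"
  unfolding matroid_def
proof (intro conjI allI impI)
  assume C: "C \<subseteq> E"
  show "finite (E - C - D)" using finite_ground by auto
  fix X Y
  show "X \<subseteq> E - C - D \<Longrightarrow> contr_rank r C X \<le> card X"
    using rank_Un_le_card[of C X] C unfolding contr_rank_def by (fastforce simp: Un_commute)
  show "X \<subseteq> Y \<and> Y \<subseteq> E - C - D \<Longrightarrow> contr_rank r C X \<le> contr_rank r C Y"
    using rank_mono[of "X \<union> C" "Y \<union> C"] C unfolding contr_rank_def by (fastforce intro: diff_le_mono)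
  assume XY: "X \<subseteq> E - C - D \<and> Y \<subseteq> E - C - D"
  have "r ((X \<union> Y) \<union> C) + r ((X \<inter> Y) \<union> C) \<le> r (X \<union> C) + r (Y \<union> C)"
    using XY C by (intro rank_submod) auto
  moreover have "r C \<le> r (Z \<union> C)" if "Z \<subseteq> E" for Z using that C by (intro rank_mono) auto
  then have "r C \<le> r ((X \<union> Y) \<union> C)" "r C \<le> r ((X \<inter> Y) \<union> C)"
    "r C \<le> r (X \<union> C)" "r C \<le> r (Y \<union> C)"
    using XY by (metis Diff_subset Int_lower1 Un_least subset_trans)+
  ultimately show "contr_rank r C (X \<union> Y) + contr_rank r C (X \<inter> Y)
      \<le> contr_rank r C X + contr_rank r C Y"
    unfolding contr_rank_def by linarith
qed

lemma conn_minor: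
  assumes "C \<subseteq> E" "C \<inter> D = {}" "X \<subseteq> E - C - D"
  shows "int (conn_fn (E - C - D) (contr_rank r C) X) = minor_conn E r C D X"
proof -
  have "(E - C - D) \<union> C = E - D" using assms by auto
  moreover have "r (E - D) + r C \<le> r (X \<union> C) + r ((E - C - D - X) \<union> C)"
    using assms by (intro rank_submod) auto
  moreover have "r C \<le> r (X \<union> C)" "r C \<le> r ((E - C - D - X) \<union> C)" "r C \<le> r (E - D)"
    using assms by (auto intro: rank_mono)
  ultimately show ?thesis unfolding conn_fn_def contr_rank_def minor_conn_def by simp
qed

lemma minor_conn_compl:
  "C \<subseteq> E \<Longrightarrow> X \<subseteq> E - C - D \<Longrightarrow> minor_conn E r C D (E - C - D - X) = minor_conn E r C D X"
  unfolding minor_conn_def by (simp add: Diff_Diff_Int inf.absorb2)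

lemma three_connected_minor_iff:
  assumes "C \<subseteq> E" "C \<inter> D = {}"
  shows "three_connected (E - C - D) (contr_rank r C) \<longleftrightarrow>
    (\<forall>k X. 1 \<le> k \<and> k < 3 \<and> X \<subseteq> E - C - D \<and> k \<le> card X \<and> k \<le> card (E - C - D - X)
       \<longrightarrow> int k \<le> minor_conn E r C D X)"
  using conn_minor[OF assms] matroid_minor[OF assms(1)]
  unfolding n_connected_def k_separation_def by (metis not_le of_nat_less_iff)

lemma not_three_connected_minorE:
  assumes "C \<subseteq> E" "C \<inter> D = {}" "\<not> three_connected (E - C - D) (contr_rank r C)"
    and "x \<in> E - C - D"
  obtains k A where "k = 1 \<or> k = 2" "A \<subseteq> E - C - D" "x \<in> A" "k \<le> card A"
    "k \<le> card (E - C - D - A)" "minor_conn E r C D A < int k"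
proof -
  obtain k X where X: "1 \<le> k" "k < 3" "X \<subseteq> E - C - D" "k \<le> card X" "k \<le> card (E - C - D - X)"
    "minor_conn E r C D X < int k"
    using assms(3) unfolding three_connected_minor_iff[OF assms(1,2)] by auto
  have k: "k = 1 \<or> k = 2" using X(1,2) by auto
  show ?thesis
  proof (cases "x \<in> X")
    case True
    then show ?thesis using that[of k X] X k by auto
  next
    case False
    have "E - C - D - (E - C - D - X) = X" using X by auto
    then show ?thesis
      using that[of k "E - C - D - X"] X k False assms(4) minor_conn_compl[OF assms(1) X(3)] by auto
  qed
qed

lemma conn_le_minor_conn:
  assumes "C \<subseteq> E" "D \<subseteq> E" "A \<subseteq> E - C - D"
  shows "int (conn_fn E r (A \<union> C \<union> D)) \<le> minor_conn E r C D A + int (card C) + int (card D)"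
proof -
  have "conn_fn E r (A \<union> C \<union> D) + r E = r (A \<union> C \<union> D) + r (E - C - D - A)"
    using conn_add_rank[of "A \<union> C \<union> D"] assms by (simp add: Diff_eq Int_ac Un_ac)
  moreover have "r (A \<union> C \<union> D) \<le> r (A \<union> C) + card D"
    using rank_Un_le_card[of "A \<union> C" D] assms by auto
  moreover have "r (E - C - D - A) \<le> r ((E - C - D - A) \<union> C)" using assms by (intro rank_mono) auto
  moreover have "r (E - D) \<le> r E" "r C \<le> card C" using assms rank_mono rank_le_card by auto
  ultimately show ?thesis unfolding minor_conn_def by simp
qed

lemma minor_conn_delete_le:
  assumes "C \<subseteq> E" "C \<inter> D = {}" "x \<in> E - C - D" "X \<subseteq> E - C - D"
  shows "minor_conn E r C (insert x D) (X - {x}) \<le> minor_conn E r C D X"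
proof (cases "x \<in> X")
  case False
  define Y where "Y = (E - C - insert x D - X) \<union> C"
  have "(E - C - D - X) \<union> C = insert x Y" using assms False unfolding Y_def by auto
  moreover have "r (E - D) + r Y \<le> r (insert x Y) + r (E - insert x D)"
    using assms unfolding Y_def by (intro rank_submod) auto
  ultimately show ?thesis unfolding minor_conn_def using False Y_def by simp
next
  case True
  have "E - C - insert x D - (X - {x}) = E - C - D - X" "X \<union> C = insert x ((X - {x}) \<union> C)"
    using True by auto
  moreover have "r (E - D) + r ((X - {x}) \<union> C) \<le> r (insert x ((X - {x}) \<union> C)) + r (E - insert x D)"
    using assms by (intro rank_submod) auto
  ultimately show ?thesis unfolding minor_conn_def by simp
qed

lemma minor_conn_contract_le:
  assumes "C \<subseteq> E" "x \<in> E - C - D" "X \<subseteq> E - C - D"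
  shows "minor_conn E r (insert x C) D (X - {x}) \<le> minor_conn E r C D X"
proof (cases "x \<in> X")
  case False
  have "(E - insert x C - D - X) \<union> insert x C = (E - C - D - X) \<union> C" using assms False by auto
  moreover have "r (insert x (X \<union> C)) + r C \<le> r (X \<union> C) + r (insert x C)"
    using assms False by (intro rank_submod) auto
  ultimately show ?thesis unfolding minor_conn_def using False by simp
next
  case True
  define Z where "Z = (E - C - D - X) \<union> C"
  have "(E - insert x C - D - (X - {x})) \<union> insert x C = insert x Z" "(X - {x}) \<union> insert x C = X \<union> C"
    using True unfolding Z_def by auto
  moreover have "r (insert x Z) + r C \<le> r Z + r (insert x C)"
    using assms True unfolding Z_def by (intro rank_submod) auto
  ultimately show ?thesis unfolding minor_conn_def using Z_def by simp
qed

end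

locale matroid_tangle = rank_matroid +
  fixes T :: "'a set set" and \<theta> :: nat
  assumes tangle: "is_tangle E r T \<theta>"
begin

lemma tangle_subset: "X \<in> T \<Longrightarrow> X \<subseteq> E"
  using tangle unfolding is_tangle_def by auto

lemma tangle_conn_less: "X \<in> T \<Longrightarrow> conn_fn E r X < \<theta>"
  using tangle unfolding is_tangle_def by auto

lemma tangle_mem_or_compl: "X \<subseteq> E \<Longrightarrow> conn_fn E r X < \<theta> \<Longrightarrow> X \<in> T \<or> E - X \<in> T"
  using tangle unfolding is_tangle_def by auto

lemma tangle_no_cover: "X \<in> T \<Longrightarrow> Y \<in> T \<Longrightarrow> Z \<in> T \<Longrightarrow> X \<union> Y \<union> Z \<noteq> E"
  using tangle unfolding is_tangle_def by auto

lemma cosingleton_notin_tangle: "e \<in> E \<Longrightarrow> E - {e} \<notin> T"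
  using tangle unfolding is_tangle_def by auto

lemma ground_notin_tangle: "E \<notin> T"
  using tangle_no_cover[of E E E] by auto

lemma finite_tangle: "finite T"
proof -
  have "T \<subseteq> Pow E" using tangle_subset by auto
  then show ?thesis using finite_ground finite_subset by blast
qed

lemma tangle_Un_mem:
  assumes "X \<in> T" "Y \<in> T" "conn_fn E r (X \<union> Y) < \<theta>"
  shows "X \<union> Y \<in> T"
proof (rule ccontr)
  assume "X \<union> Y \<notin> T"
  moreover have XY: "X \<union> Y \<subseteq> E" using assms tangle_subset by auto
  ultimately have "E - (X \<union> Y) \<in> T" using tangle_mem_or_compl assms(3) by blast
  moreover have "X \<union> Y \<union> (E - (X \<union> Y)) = E" using XY by auto
  ultimately show False using tangle_no_cover assms by blast
qed

lemma small_in_tangle: "Q \<subseteq> E \<Longrightarrow> card Q < \<theta> \<Longrightarrow> Q \<in> T"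
proof -
  assume Q: "Q \<subseteq> E" "card Q < \<theta>"
  then have "finite Q" using finite_ground finite_subset by blast
  then show ?thesis using Q
  proof (induction Q rule: finite_induct)
    case empty
    then show ?case using tangle_mem_or_compl[of "{}"] conn_le_card[of "{}"] ground_notin_tangle by auto
  next
    case (insert q F)
    then have F: "F \<in> T" and q: "q \<in> E" by auto
    show ?case
    proof (rule ccontr)
      assume "insert q F \<notin> T"
      moreover have "conn_fn E r (insert q F) < \<theta>" using conn_le_card[of "insert q F"] insert by auto
      ultimately have "E - insert q F \<in> T" using tangle_mem_or_compl insert.prems(1) by blast
      moreover have "conn_fn E r (E - {q}) < \<theta>"
        using conn_compl[of "{q}"] conn_le_card[of "{q}"] q insert.prems(2) insert.hyps by simp
      moreover have "(E - insert q F) \<union> F = E - {q}" using insert by auto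
      ultimately have "E - {q} \<in> T" using tangle_Un_mem[of "E - insert q F" F] F by simp
      then show False using cosingleton_notin_tangle q by blast
    qed
  qed
qed

lemma tangle_rank_eq_Min:
  assumes "\<exists>Y\<in>T. W \<subseteq> Y"
  shows "tangle_rank E r T \<theta> W = Min {conn_fn E r Y | Y. Y \<in> T \<and> W \<subseteq> Y}"
  unfolding tangle_rank_def using assms by (rule if_P)

lemma tangle_indep_card_le_conn:
  assumes "tangle_indep E r T \<theta> W" "Y \<in> T" "W \<subseteq> Y"
  shows "card W \<le> conn_fn E r Y"
proof -
  have "card W = tangle_rank E r T \<theta> W" using assms(1) unfolding tangle_indep_def by simp
  also have "\<dots> = Min {conn_fn E r Y | Y. Y \<in> T \<and> W \<subseteq> Y}"
    using assms(2,3) by (intro tangle_rank_eq_Min) blast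
  also have "\<dots> \<le> conn_fn E r Y" using assms finite_tangle by (intro Min_le) auto
  finally show ?thesis .
qed

lemma tangle_indep_card_le_order:
  assumes "tangle_indep E r T \<theta> W"
  shows "card W \<le> \<theta>"
proof (cases "\<exists>Y\<in>T. W \<subseteq> Y")
  case True
  then obtain Y where "Y \<in> T" "W \<subseteq> Y" by blast
  then have "card W \<le> conn_fn E r Y" "conn_fn E r Y < \<theta>"
    using tangle_indep_card_le_conn[OF assms] tangle_conn_less by auto
  then show ?thesis by linarith
next
  case False
  then show ?thesis using assms unfolding tangle_indep_def tangle_rank_def by simp
qed

lemma tangle_indep_compl_notin:
  assumes W: "tangle_indep E r T \<theta> W" "W \<noteq> {}"
  shows "E - W \<notin> T"
proof
  assume compl: "E - W \<in> T"
  obtain w where w: "w \<in> W" using W by blast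
  have WE: "W \<subseteq> E" "finite W" using W finite_ground finite_subset unfolding tangle_indep_def by auto
  have card_W: "card W \<le> \<theta>" "card (W - {w}) + 1 = card W"
    using tangle_indep_card_le_order[OF W(1)] card_Suc_Diff1[OF WE(2) w] by auto
  show False
  proof (cases "\<theta> \<ge> 2")
    case True
    have "card (W - {w}) < \<theta>" using card_W True by linarith
    then have "W - {w} \<in> T" using WE by (intro small_in_tangle) auto
    moreover have "{w} \<in> T" using w WE True by (intro small_in_tangle) auto
    moreover have "(E - W) \<union> (W - {w}) \<union> {w} = E" using w WE by auto
    ultimately show False using tangle_no_cover compl by blast
  next
    case False
    have "card W \<ge> 1" using card_W by linarith
    with False have "card W = 1" using card_W by linarith
    then have "W = {w}" using w by (metis card_1_singletonE singletonD)
    then show False using cosingleton_notin_tangle w WE compl by auto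
  qed
qed

lemma tangle_indep_conn_eq_card:
  assumes W: "tangle_indep E r T \<theta> W" "W \<noteq> {}"
  shows "conn_fn E r W = card W"
proof -
  have WE: "W \<subseteq> E" using W unfolding tangle_indep_def by auto
  have "card W \<le> conn_fn E r W"
  proof (cases "conn_fn E r W < \<theta>")
    case True
    then have "W \<in> T" using tangle_mem_or_compl[OF WE] tangle_indep_compl_notin[OF W] by blast
    then show ?thesis using tangle_indep_card_le_conn[OF W(1)] by blast
  next
    case False
    then show ?thesis using tangle_indep_card_le_order[OF W(1)] by linarith
  qed
  then show ?thesis using conn_le_card[OF WE] by simp
qed

lemma tangle_indep_subset_indep:
  assumes "tangle_indep E r T \<theta> W" "W \<noteq> {}" "V \<subseteq> W"
  shows "r V = card V"
proof -
  have WE: "W \<subseteq> E" using assms(1) unfolding tangle_indep_def by blast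
  have "card W \<le> r W" using tangle_indep_conn_eq_card[OF assms(1,2)] conn_le_rank[OF WE] by simp
  then have "r W = card W" using rank_le_card[OF WE] by simp
  then show ?thesis using indep_subset WE assms(3) by blast
qed

lemma tangle_indep_extension_conn:
  assumes W: "tangle_indep E r T \<theta> W" "3 \<le> card W"
    and Y: "W \<subseteq> Y" "Y \<subseteq> E" "card (Y - W) \<le> 1"
  shows "card W \<le> conn_fn E r Y"
proof (rule ccontr)
  assume less: "\<not> card W \<le> conn_fn E r Y"
  have "finite Y" using Y(2) finite_ground by (rule finite_subset)
  then have fin: "finite W" "finite Y" using Y(1) finite_subset by auto
  have "W \<noteq> {}" using W(2) by (intro notI) simp
  then obtain w where w: "w \<in> W" by blast
  have card_order: "card W \<le> \<theta>" using tangle_indep_card_le_order[OF W(1)] .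
  have "card (W - {w}) < \<theta>" using card_Suc_Diff1[OF fin(1) w] card_order by linarith
  then have part1: "W - {w} \<in> T" using Y by (intro small_in_tangle) auto
  have "card (insert w (Y - W)) \<le> Suc (card (Y - W))" using fin by (simp add: card_insert_if)
  then have "card (insert w (Y - W)) < \<theta>" using Y W(2) card_order by linarith
  then have part2: "insert w (Y - W) \<in> T" using w Y by (intro small_in_tangle) auto
  have "(W - {w}) \<union> insert w (Y - W) = Y" using w Y by blast
  moreover have "conn_fn E r Y < \<theta>" using less card_order by linarith
  ultimately have "Y \<in> T" using tangle_Un_mem[OF part1 part2] by simp
  then show False using tangle_indep_card_le_conn[OF W(1) _ Y(1)] less by blast
qed

end

locale tangle_minor = matroid_tangle +
  fixes C D :: "'a set"
  assumes C_subset: "C \<subseteq> E" and D_subset: "D \<subseteq> E" and disjoint: "C \<inter> D = {}"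
    and tangle_indep_CD: "tangle_indep E r T \<theta> (C \<union> D)"
    and three_connected_ground: "three_connected E r"
    and three_connected_minor: "three_connected (E - C - D) (contr_rank r C)"
begin

lemma finite_C: "finite C" and finite_D: "finite D"
  using C_subset D_subset finite_ground finite_subset by auto

lemma card_CD: "card (C \<union> D) = card C + card D"
  using finite_C finite_D disjoint by (simp add: card_Un_disjoint)

lemma indep_CD: "V \<subseteq> C \<union> D \<Longrightarrow> r V = card V"
  using tangle_indep_subset_indep[OF tangle_indep_CD] rank_empty by (cases "C \<union> D = {}") auto

lemma minor_conn_ge:
  "1 \<le> k \<Longrightarrow> k < 3 \<Longrightarrow> X \<subseteq> E - C - D \<Longrightarrow> k \<le> card X \<Longrightarrow> k \<le> card (E - C - D - X) \<Longrightarrow>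
    int k \<le> minor_conn E r C D X"
  using three_connected_minor unfolding three_connected_minor_iff[OF C_subset disjoint] by blast

lemma minor_conn_singleton_ge: "x \<in> E - C - D \<Longrightarrow> 2 \<le> card (E - C - D) \<Longrightarrow> 1 \<le> minor_conn E r C D {x}"
  using minor_conn_ge[of 1 "{x}"] finite_ground by (simp add: card_Diff_singleton)

lemma minor_conn_deleted_ge:
  assumes d: "d \<in> D"
  shows "1 \<le> minor_conn E r C (D - {d}) {d}"
proof -
  have "conn_fn E r (C \<union> D) = card C + card D"
    using tangle_indep_conn_eq_card[OF tangle_indep_CD] card_CD d by auto
  moreover have "{d} \<union> C \<union> (D - {d}) = C \<union> D" using d by auto
  moreover have "int (conn_fn E r ({d} \<union> C \<union> (D - {d})))
      \<le> minor_conn E r C (D - {d}) {d} + int (card C) + int (card (D - {d}))"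
    using C_subset D_subset disjoint d by (intro conn_le_minor_conn) auto
  moreover have "card (D - {d}) + 1 = card D" using card_Suc_Diff1[OF finite_D d] by simp
  ultimately show ?thesis by simp
qed

lemma rank_compl_delete_eq:
  assumes d: "d \<in> D"
  shows "r (E - (D - {d})) = r (E - D)"
proof -
  have d_notin: "d \<notin> C" using d disjoint by auto
  have "E - C - (D - {d}) - {d} \<union> C = E - D" using d d_notin C_subset disjoint by auto
  then have "1 + int (r C) + int (r (E - (D - {d}))) \<le> int (r (insert d C)) + int (r (E - D))"
    using minor_conn_deleted_ge[OF d] unfolding minor_conn_def by (simp add: insert_commute)
  moreover have "r (insert d C) = card (insert d C)" "r C = card C"
    using indep_CD d by auto
  moreover have "card (insert d C) = card C + 1" using finite_C d_notin by simp
  moreover have "r (E - D) \<le> r (E - (D - {d}))" by (intro rank_mono) auto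
  ultimately show ?thesis by linarith
qed

lemma separating_pair_of_deleted:
  assumes d: "d \<in> D" and not3: "\<not> three_connected (E - C - (D - {d})) (contr_rank r C)"
  obtains e where "e \<in> E - C - D" "2 \<le> card (E - C - D - {e})"
    "minor_conn E r C (D - {d}) {d, e} < 2"
proof -
  let ?G = "E - C - (D - {d})"
  have D': "D - {d} \<subseteq> E" "C \<inter> (D - {d}) = {}" using D_subset disjoint by auto
  have G: "?G = insert d (E - C - D)" using d disjoint D_subset by auto
  obtain k A where k: "k = 1 \<or> k = 2" and A: "A \<subseteq> ?G" "d \<in> A" "k \<le> card A" "k \<le> card (?G - A)"
    and sep: "minor_conn E r C (D - {d}) A < int k"
    using not_three_connected_minorE[OF C_subset D'(2) not3] G by blast
  have A_rest: "A - {d} \<subseteq> E - C - D" "?G - A = E - C - D - (A - {d})"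
    using A(1,2) d disjoint by auto
  have "minor_conn E r C D (A - {d}) \<le> minor_conn E r C (D - {d}) A"
    using minor_conn_delete_le[OF C_subset D'(2), of d A] A d disjoint D_subset
    by (auto simp: insert_absorb)
  then have small: "card (A - {d}) < k"
    using minor_conn_ge[OF _ _ A_rest(1), of k] k A(4) sep A_rest(2) by fastforce
  have "finite A" using A(1) finite_ground by (meson Diff_subset finite_subset)
  then have card_A: "card A = card (A - {d}) + 1" using card_Suc_Diff1[of A d] A(2) by simp
  have "k = 2"
  proof (rule ccontr)
    assume "k \<noteq> 2"
    then have "A - {d} = {}" using k small card_A \<open>finite A\<close> by auto
    then have "A = {d}" using A(2) by auto
    then show False using minor_conn_deleted_ge[OF d] sep k \<open>k \<noteq> 2\<close> by auto
  qed
  then have "card (A - {d}) = 1" using small card_A A(3) by linarith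
  then obtain e where e: "A - {d} = {e}" by (rule card_1_singletonE)
  then have "A = {d, e}" "e \<in> E - C - D" using A A_rest by auto
  then show ?thesis using that[of e] e sep A(4) A_rest(2) \<open>k = 2\<close> by auto
qed

lemma separating_pair_ranks:
  assumes d: "d \<in> D" and e: "e \<in> E - C - D" "2 \<le> card (E - C - D - {e})"
    and sep: "minor_conn E r C (D - {d}) {d, e} < 2"
  shows "r (insert e C) = card C + 1" "r (insert d (insert e C)) = card C + 1"
proof -
  have "d \<notin> C" using d disjoint by auto
  then have rC: "r C = card C" and rCd: "r (insert d C) = card C + 1"
    using indep_CD[of C] indep_CD[of "insert d C"] d finite_C by auto
  have "1 \<le> minor_conn E r C D {e}" using minor_conn_ge[of 1 "{e}"] e by auto
  then have "1 + int (r C) + int (r (E - D)) \<le> int (r (insert e C)) + int (r ((E - C - D - {e}) \<union> C))"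
    unfolding minor_conn_def by simp
  moreover have "r ((E - C - D - {e}) \<union> C) \<le> r (E - D)"
    using C_subset disjoint by (intro rank_mono) auto
  moreover have "r (insert e C) \<le> r C + 1" using rank_insert_le C_subset e by auto
  ultimately have rCe: "r (insert e C) = card C + 1"
    and rest: "r ((E - C - D - {e}) \<union> C) = r (E - D)"
    using rC by linarith+
  then show "r (insert e C) = card C + 1" by simp
  have "E - C - (D - {d}) - {d, e} = E - C - D - {e}" using d by auto
  then have "int (r (insert d (insert e C))) + int (r ((E - C - D - {e}) \<union> C))
      < 2 + int (r C) + int (r (E - (D - {d})))"
    using sep unfolding minor_conn_def by simp
  moreover have "r (insert d C) \<le> r (insert d (insert e C))"
    using C_subset e d D_subset by (intro rank_mono) auto
  ultimately show "r (insert d (insert e C)) = card C + 1"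
    using rest rank_compl_delete_eq[OF d] rC rCd by linarith
qed

lemma exchange_element:
  assumes d: "d \<in> D" and e: "e \<in> E - C - D" "2 \<le> card (E - C - D - {e})"
    and dep: "r (insert d (insert e C)) = card C + 1"
  obtains c where "c \<in> C" "r (insert d (insert e (C - {c}))) = card C + 1"
proof -
  define P where "P K \<longleftrightarrow> K \<subseteq> C \<and> r (insert d (insert e K)) \<le> card K + 1" for K
  have "P C" unfolding P_def using dep by simp
  then obtain K where K: "P K" and K_min: "\<And>K'. P K' \<Longrightarrow> card K \<le> card K'"
    using ex_has_least_nat[of P C card] by blast
  have KC: "K \<subseteq> C" and rK: "r (insert d (insert e K)) \<le> card K + 1" using K unfolding P_def by auto
  have fK: "finite K" using KC finite_C finite_subset by blast
  have de: "d \<notin> C" "d \<noteq> e" "{d, e} \<subseteq> E" using d e disjoint D_subset by auto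
  have "K \<noteq> {}"
  proof
    assume "K = {}"
    then have "conn_fn E r {d, e} \<le> 1" using rK conn_le_rank[OF de(3)] by simp
    moreover have "E - C - D - {e} \<subseteq> E - {d, e}" using d by auto
    then have "2 \<le> card (E - {d, e})" using e(2) finite_ground by (meson card_mono finite_Diff le_trans)
    ultimately show False using three_connected_conn_ge[OF three_connected_ground de(3)] de(2) by simp
  qed
  then obtain c where c: "c \<in> K" by blast
  have "\<not> P (K - {c})" using K_min card_Diff1_less[OF fK c] by (meson not_le)
  then have "card (K - {c}) + 1 < r (insert d (insert e (K - {c})))" unfolding P_def using KC by auto
  moreover have "card (K - {c}) + 1 = card K" using card_Suc_Diff1[OF fK c] by simp
  moreover have "r (insert d (insert e C)) + r (insert d (insert e (K - {c})))
      \<le> r (insert d (insert e (C - {c}))) + r (insert d (insert e K))"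
    using KC c de e C_subset by (intro rank_submod) auto
  moreover have "r (insert d (insert e (C - {c}))) \<le> r (insert d (insert e C))"
    using de e C_subset by (intro rank_mono) auto
  ultimately show ?thesis using that[of c] c KC rK dep by auto
qed

lemma card_rest_ge_four:
  assumes CD: "3 \<le> card (C \<union> D)" and e: "e \<in> E - C - D"
  shows "4 \<le> card (E - C - D)"
proof (rule ccontr)
  assume small: "\<not> ?thesis"
  let ?Y = "insert e (C \<union> D)"
  have "?Y - (C \<union> D) = {e}" using e by auto
  then have Y: "C \<union> D \<subseteq> ?Y" "?Y \<subseteq> E" "card (?Y - (C \<union> D)) \<le> 1" "E - ?Y = E - C - D - {e}"
    using e C_subset D_subset by auto
  have "conn_fn E r ?Y \<le> card (E - ?Y)" using conn_compl[OF Y(2)] conn_le_card[of "E - ?Y"] by simp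
  also have "\<dots> < card (C \<union> D)" using Y(4) CD small e finite_ground by (simp add: card_Diff_singleton)
  finally show False using tangle_indep_extension_conn[OF tangle_indep_CD CD Y(1-3)] by simp
qed

end

locale tangle_minor_exchange = tangle_minor +
  fixes c d e :: 'a
  assumes c: "c \<in> C" and d: "d \<in> D" and e: "e \<in> E - C - D"
    and card_CD_ge: "3 \<le> card (C \<union> D)" and card_rest_ge: "4 \<le> card (E - C - D)"
    and rank_Ce: "r (insert e C) = card C + 1"
    and rank_Cde: "r (insert d (insert e C)) = card C + 1"
    and rank_Cde_exchange: "r (insert d (insert e (C - {c}))) = card C + 1"
begin

abbreviation exchange_conn :: "'a set \<Rightarrow> int" where
  "exchange_conn \<equiv> minor_conn E r (C - {c}) (D - {d})"

lemma exchange_distinct: "d \<notin> C" "e \<notin> C" "e \<notin> D" "c \<notin> D" "c \<noteq> d" "c \<noteq> e" "d \<noteq> e"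
  and exchange_mem: "c \<in> E" "d \<in> E" "e \<in> E"
  using c d e disjoint C_subset D_subset by auto

lemma exchange_ground: "E - (C - {c}) - (D - {d}) = insert c (insert d (E - C - D))"
  using exchange_distinct c d C_subset D_subset by auto

lemma exchange_subsets: "C - {c} \<subseteq> E" "(C - {c}) \<inter> (D - {d}) = {}"
  using C_subset disjoint by auto

lemma card_C_pos: "1 \<le> card C"
  using card_Suc_Diff1[OF finite_C c] by linarith

lemma rank_C: "r C = card C"
  using indep_CD by simp

lemma rank_C_exchange: "r (C - {c}) = card C - 1"
  using indep_CD[of "C - {c}"] c finite_C by auto

lemma rank_Cd_exchange: "r (insert d (C - {c})) = card C"
  using indep_CD[of "insert d (C - {c})"] d c finite_C exchange_distinct card_C_pos by auto

lemma card_CD_exchange: "card (C - {c}) + card (D - {d}) + 2 = card (C \<union> D)"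
  using card_CD card_Suc_Diff1[OF finite_C c] card_Suc_Diff1[OF finite_D d] by simp

lemma exchange_conn_eq:
  "X \<subseteq> E - (C - {c}) - (D - {d}) \<Longrightarrow> exchange_conn X =
    int (r (X \<union> (C - {c}))) + int (r ((E - (C - {c}) - (D - {d}) - X) \<union> (C - {c})))
      - int (card C - 1) - int (r (E - D))"
  unfolding minor_conn_def using rank_C_exchange rank_compl_delete_eq[OF d] by simp

text \<open>Otherwise \<open>C \<union> D\<close> would have an extension by at most one element with connectivity
  below \<open>|C \<union> D|\<close>.\<close>

lemma exchange_conn_ge_two:
  assumes A: "A \<subseteq> E - (C - {c}) - (D - {d})" "c \<in> A" "d \<in> A" "card (A \<inter> (E - C - D)) \<le> 1"
  shows "2 \<le> exchange_conn A"
proof -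
  let ?Y = "A \<union> (C - {c}) \<union> (D - {d})"
  have "C \<union> D \<subseteq> ?Y" "?Y \<subseteq> E" "?Y - (C \<union> D) = A \<inter> (E - C - D)"
    using A exchange_subsets D_subset by auto
  then have "card (C \<union> D) \<le> conn_fn E r ?Y"
    using tangle_indep_extension_conn[OF tangle_indep_CD card_CD_ge] A(4) by simp
  moreover have "int (conn_fn E r ?Y) \<le> exchange_conn A + int (card (C - {c})) + int (card (D - {d}))"
    using A(1) exchange_subsets D_subset by (intro conn_le_minor_conn) auto
  ultimately show ?thesis using card_CD_exchange by linarith
qed

lemma exchange_conn_cde_le: "t = c \<or> t = d \<Longrightarrow> exchange_conn {c, d, e} \<le> exchange_conn {t, e}"
proof -
  assume t: "t = c \<or> t = d"
  have s1: "{c, d, e} \<subseteq> E - (C - {c}) - (D - {d})" "{t, e} \<subseteq> E - (C - {c}) - (D - {d})"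
    using t exchange_ground exchange_distinct exchange_mem e by auto
  have r1: "r ({c, d, e} \<union> (C - {c})) = card C + 1"
  proof -
    have "{c, d, e} \<union> (C - {c}) = insert d (insert e C)" using c by auto
    then show ?thesis using rank_Cde by simp
  qed
  have r2: "r ({t, e} \<union> (C - {c})) = card C + 1"
  proof (cases "t = c")
    case True
    have "{t, e} \<union> (C - {c}) = insert e C" using c True by auto
    then show ?thesis using rank_Ce by simp
  next
    case False
    then have "{t, e} \<union> (C - {c}) = insert d (insert e (C - {c}))" using t by auto
    then show ?thesis using rank_Cde_exchange by simp
  qed
  have m: "r ((E - (C - {c}) - (D - {d}) - {c, d, e}) \<union> (C - {c}))
      \<le> r ((E - (C - {c}) - (D - {d}) - {t, e}) \<union> (C - {c}))"
    using t C_subset by (intro rank_mono) auto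
  show ?thesis using exchange_conn_eq[OF s1(1)] exchange_conn_eq[OF s1(2)] r1 r2 m by simp
qed

lemma exchange_conn_singleton: "t = c \<or> t = d \<Longrightarrow> exchange_conn {t} = 1"
proof -
  assume t: "t = c \<or> t = d"
  define s where "s = (if t = c then d else c)"
  have st: "{s, t} = {c, d}" unfolding s_def using t exchange_distinct exchange_mem by auto
  define B where "B = (E - (C - {c}) - (D - {d}) - {t}) \<union> (C - {c})"
  have Bsub: "insert s (insert e (C - {c})) \<subseteq> B" unfolding B_def
    using st exchange_ground exchange_distinct exchange_mem e by auto
  have BE: "B \<subseteq> E" unfolding B_def using C_subset by auto
  \<comment> \<open>\<open>t\<close> is spanned by \<open>C - c + s + e\<close>, hence removing it from \<open>E - (D - d)\<close> keeps the rank\<close>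
  have rS: "r (insert t (insert s (insert e (C - {c})))) = r (insert s (insert e (C - {c})))"
  proof -
    have "insert t (insert s (insert e (C - {c}))) = insert d (insert e C)" using st c by auto
    moreover have "r (insert s (insert e (C - {c}))) = card C + 1"
    proof (cases "s = c")
      case True
      then have "insert s (insert e (C - {c})) = insert e C" using c by auto
      then show ?thesis using rank_Ce by simp
    next
      case False
      then have "s = d" using st by auto
      then show ?thesis using rank_Cde_exchange by simp
    qed
    ultimately show ?thesis using rank_Cde by simp
  qed
  have tE: "t \<in> E" using t exchange_distinct exchange_mem by auto
  have "r (insert t B) = r B" using spanned_mono[OF Bsub BE tE rS] .
  moreover have "insert t B = E - (D - {d})" unfolding B_def
    using t exchange_ground C_subset disjoint d by auto
  moreover have "r ({t} \<union> (C - {c})) = card C"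
  proof (cases "t = c")
    case True
    then have "{t} \<union> (C - {c}) = C" using c by auto
    then show ?thesis using rank_C by simp
  next
    case False
    then have "{t} \<union> (C - {c}) = insert d (C - {c})" using t by auto
    then show ?thesis using rank_Cd_exchange by simp
  qed
  moreover have "{t} \<subseteq> E - (C - {c}) - (D - {d})" using t exchange_ground by auto
  ultimately show ?thesis
    using exchange_conn_eq[of "{t}"] rank_compl_delete_eq[OF d] card_C_pos unfolding B_def by simp
qed

lemma rank_singleton_rest_ge:
  assumes x: "x \<in> E - C - D"
  shows "1 + int (card C) + int (r (E - D)) \<le> int (r (insert x C)) + int (r ((E - C - D - {x}) \<union> C))"
  using minor_conn_singleton_ge[OF x] card_rest_ge rank_C unfolding minor_conn_def by simp

lemma exchange_conn_pair_c:
  assumes x: "x \<in> E - C - D" "x \<noteq> e"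
  shows "2 \<le> exchange_conn {c, x}"
proof -
  define B where "B = insert d (E - C - D - {x}) \<union> (C - {c})"
  have "insert d (insert e (C - {c})) \<subseteq> B" "B \<subseteq> E"
    unfolding B_def using e x C_subset exchange_mem by auto
  moreover have "insert c (insert d (insert e (C - {c}))) = insert d (insert e C)" using c by auto
  then have "r (insert c (insert d (insert e (C - {c})))) = r (insert d (insert e (C - {c})))"
    using rank_Cde rank_Cde_exchange by simp
  ultimately have "r (insert c B) = r B" using spanned_mono exchange_mem by blast
  moreover have "insert c B = insert d ((E - C - D - {x}) \<union> C)" unfolding B_def using c by auto
  ultimately have rB: "r (insert d ((E - C - D - {x}) \<union> C)) = r B" by simp
  have "r (E - (D - {d})) + r ((E - C - D - {x}) \<union> C)
      \<le> r (insert d ((E - C - D - {x}) \<union> C)) + r (E - D)"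
    using exchange_distinct exchange_mem d C_subset disjoint by (intro rank_submod) auto
  moreover have "exchange_conn {c, x} =
      int (r (insert x C)) + int (r B) - int (card C - 1) - int (r (E - D))"
  proof -
    have "{c, x} \<union> (C - {c}) = insert x C" using c by auto
    moreover have "(E - (C - {c}) - (D - {d}) - {c, x}) \<union> (C - {c}) = B"
      unfolding B_def exchange_ground using exchange_distinct x c d by auto
    ultimately show ?thesis using exchange_conn_eq[of "{c, x}"] x exchange_ground by simp
  qed
  moreover have "int (card C - 1) = int (card C) - 1" using card_C_pos by simp
  ultimately show ?thesis
    using rB rank_singleton_rest_ge[OF x(1)] rank_compl_delete_eq[OF d] by linarith
qed

lemma exchange_conn_pair_d:
  assumes x: "x \<in> E - C - D" "x \<noteq> e"
  shows "2 \<le> exchange_conn {d, x}"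
proof -
  have "{d, x} \<union> (C - {c}) = insert d (insert x (C - {c}))"
    and "(E - (C - {c}) - (D - {d}) - {d, x}) \<union> (C - {c}) = (E - C - D - {x}) \<union> C"
    using exchange_ground exchange_distinct x c d by auto
  then have conn_dx: "exchange_conn {d, x} = int (r (insert d (insert x (C - {c}))))
      + int (r ((E - C - D - {x}) \<union> C)) - int (card C - 1) - int (r (E - D))"
    using exchange_conn_eq[of "{d, x}"] x exchange_ground by simp
  show ?thesis
  proof (cases "card C + 1 \<le> r (insert d (insert x (C - {c})))")
    case True
    have "r (insert x C) \<le> r C + 1" using rank_insert_le C_subset x by auto
    then show ?thesis
      using True conn_dx rank_singleton_rest_ge[OF x(1)] rank_C card_C_pos by linarith
  next
    case False
    \<comment> \<open>then \<open>x\<close> is spanned by \<open>C + e\<close> too, so \<open>{x, e}\<close> would be 2-separating in \<open>M/C\D\<close>\<close>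
    have "r (insert x (insert d (insert e C))) + r (insert d (C - {c}))
        \<le> r (insert d (insert e C)) + r (insert d (insert x (C - {c})))"
      using exchange_distinct exchange_mem x c C_subset by (intro rank_submod) auto
    moreover have "r (insert x (insert e C)) \<le> r (insert x (insert d (insert e C)))"
      using exchange_mem x C_subset by (intro rank_mono) auto
    ultimately have rxe: "r (insert x (insert e C)) \<le> card C + 1"
      using False rank_Cde rank_Cd_exchange by linarith
    have xe: "{x, e} \<subseteq> E - C - D" "card {x, e} = 2" using x e by auto
    then have "card (E - C - D - {x, e}) = card (E - C - D) - 2"
      using finite_ground by (simp add: card_Diff_subset)
    then have "2 \<le> minor_conn E r C D {x, e}"
      using minor_conn_ge[of 2 "{x, e}"] xe card_rest_ge by simp
    moreover have "r ((E - C - D - {x, e}) \<union> C) \<le> r (E - D)"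
      using C_subset disjoint by (intro rank_mono) auto
    moreover have "{x, e} \<union> C = insert x (insert e C)" by auto
    ultimately show ?thesis using rxe rank_C unfolding minor_conn_def by simp
  qed
qed

lemma exchange_conn_pair_ge:
  assumes t: "t = c \<or> t = d" and x: "x \<in> E - C - D"
  shows "2 \<le> exchange_conn {t, x}"
proof (cases "x = e")
  case True
  have "{c, d, e} \<inter> (E - C - D) = {e}" using c d e by auto
  then have "2 \<le> exchange_conn {c, d, e}"
    using exchange_ground e by (intro exchange_conn_ge_two) auto
  then show ?thesis using exchange_conn_cde_le[OF t] True by simp
next
  case False
  then show ?thesis using t exchange_conn_pair_c[OF x] exchange_conn_pair_d[OF x] by auto
qed

lemma exchange_conn_ge_small_side:
  assumes X: "X \<subseteq> E - (C - {c}) - (D - {d})" and k: "k = 1 \<or> k = 2" "k \<le> card X"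
    and small: "card (X \<inter> (E - C - D)) < k"
  shows "int k \<le> exchange_conn X"
proof -
  have X_split: "X = (X \<inter> {c, d}) \<union> (X \<inter> (E - C - D))" using X exchange_ground by auto
  have at_most_one: "card (X \<inter> (E - C - D)) \<le> 1" using k small by auto
  obtain rest_cases: "X \<inter> (E - C - D) = {} \<or> (\<exists>x. X \<inter> (E - C - D) = {x})"
  proof (cases "X \<inter> (E - C - D) = {}")
    case False
    then have "card (X \<inter> (E - C - D)) = 1"
      using at_most_one finite_ground by (simp add: Suc_leI card_gt_0_iff le_antisym)
    then obtain x where "X \<inter> (E - C - D) = {x}" by (rule card_1_singletonE)
    then show ?thesis using that by blast
  qed simp
  consider "c \<in> X" "d \<in> X" | "c \<notin> X" "d \<notin> X" | t where "t = c \<or> t = d" "X \<inter> {c, d} = {t}"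
    using exchange_distinct by blast
  then show ?thesis
  proof cases
    case 1
    then have "2 \<le> exchange_conn X" using exchange_conn_ge_two[OF X] at_most_one by blast
    then show ?thesis using k by auto
  next
    case 2
    then have "X = X \<inter> (E - C - D)" using X_split by auto
    then show ?thesis using k small by simp
  next
    case (3 t)
    from rest_cases show ?thesis
    proof
      assume "X \<inter> (E - C - D) = {}"
      then have "X = {t}" using X_split 3 by auto
      then show ?thesis using exchange_conn_singleton[OF 3(1)] k by auto
    next
      assume "\<exists>x. X \<inter> (E - C - D) = {x}"
      then obtain x where x: "X \<inter> (E - C - D) = {x}" ..
      then have "X = {t, x}" using X_split 3 by auto
      moreover have "x \<in> E - C - D" using x by auto
      ultimately show ?thesis using exchange_conn_pair_ge[OF 3(1), of x] k by auto
    qed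
  qed
qed

lemma exchange_conn_ge_rest:
  assumes X: "X \<subseteq> E - (C - {c}) - (D - {d})"
  shows "minor_conn E r C D (X \<inter> (E - C - D)) \<le> exchange_conn X"
proof -
  have "minor_conn E r (insert c (C - {c})) (D - {d}) (X - {c}) \<le> exchange_conn X"
    using X exchange_ground exchange_subsets by (intro minor_conn_contract_le) auto
  moreover have "minor_conn E r C (insert d (D - {d})) (X - {c} - {d})
      \<le> minor_conn E r C (D - {d}) (X - {c})"
    using X exchange_ground exchange_distinct exchange_mem C_subset disjoint
    by (intro minor_conn_delete_le) auto
  moreover have "insert c (C - {c}) = C" "insert d (D - {d}) = D" using c d by auto
  moreover have "X - {c} - {d} = X \<inter> (E - C - D)" using X exchange_ground c d by auto
  ultimately show ?thesis by simp
qed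

theorem three_connected_exchange:
  "three_connected (E - (C - {c}) - (D - {d})) (contr_rank r (C - {c}))"
  unfolding three_connected_minor_iff[OF exchange_subsets]
proof (intro allI impI)
  let ?G = "E - (C - {c}) - (D - {d})"
  fix k X
  assume "1 \<le> k \<and> k < 3 \<and> X \<subseteq> ?G \<and> k \<le> card X \<and> k \<le> card (?G - X)"
  then have k: "k = 1 \<or> k = 2" and X: "X \<subseteq> ?G" "k \<le> card X" "k \<le> card (?G - X)" by auto
  show "int k \<le> exchange_conn X"
  proof (rule ccontr)
    assume less: "\<not> int k \<le> exchange_conn X"
    have compl: "?G - (?G - X) = X" "E - C - D - X \<inter> (E - C - D) = (?G - X) \<inter> (E - C - D)"
      using X(1) exchange_ground by auto
    have "minor_conn E r C D (X \<inter> (E - C - D)) < int k"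
      using exchange_conn_ge_rest[OF X(1)] less by simp
    then have "card (X \<inter> (E - C - D)) < k \<or> card ((?G - X) \<inter> (E - C - D)) < k"
      using minor_conn_ge[of k "X \<inter> (E - C - D)"] k compl(2) by fastforce
    moreover have "exchange_conn (?G - X) = exchange_conn X"
      using minor_conn_compl exchange_subsets X(1) by blast
    ultimately show False
      using exchange_conn_ge_small_side[OF X(1) k X(2)]
        exchange_conn_ge_small_side[of "?G - X" k, unfolded compl(1)] k X less by force
  qed
qed

end

lemma (in tangle_minor) small_case_exchange:
  assumes "card (C \<union> D) < 3" "c \<in> C" "d \<in> D"
  shows "three_connected (E - (C - {c}) - (D - {d})) (contr_rank r (C - {c}))"
proof -
  have "card C = 1" "card D = 1"
   
      using assms card_CD card_Suc_Diff1[OF finite_C assms(2)] card_Suc_Diff1[OF finite_D assms(3)]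
      by linarith+
  then have "C = {c}" "D = {d}" using assms(2,3) by (metis card_1_singletonE singletonD)+
  then have "E - (C - {c}) - (D - {d}) = E" "contr_rank r (C - {c}) = r"
    using contr_rank_empty by simp_all
  then show ?thesis using three_connected_ground by simp
qed

theorem lemma4p2:
  fixes E :: "'a set" and r :: "'a set \<Rightarrow> nat" and T :: "'a set set"
    and \<theta> :: nat and C D :: "'a set"
  assumes "three_connected E r"
    and "is_tangle E r T \<theta>"
    and "C \<subseteq> E" and "D \<subseteq> E" and "C \<inter> D = {}"
    and "tangle_indep E r T \<theta> (C \<union> D)"
    and "three_connected (E - C - D) (contr_rank r C)"
  shows "\<forall>d\<in>D. three_connected (E - C - (D - {d})) (contr_rank r C)
           \<or> (\<exists>c\<in>C. three_connected (E - (C - {c}) - (D - {d})) (contr_rank r (C - {c})))"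
proof
  fix d assume d: "d \<in> D"
  interpret tangle_minor E r T \<theta> C D
    using assms by unfold_locales (auto simp: n_connected_def)
  show "three_connected (E - C - (D - {d})) (contr_rank r C)
      \<or> (\<exists>c\<in>C. three_connected (E - (C - {c}) - (D - {d})) (contr_rank r (C - {c})))"
  proof (cases "three_connected (E - C - (D - {d})) (contr_rank r C)")
    case False
    then obtain e where e: "e \<in> E - C - D" "2 \<le> card (E - C - D - {e})"
      and sep: "minor_conn E r C (D - {d}) {d, e} < 2"
      by (rule separating_pair_of_deleted[OF d])
    note ranks = separating_pair_ranks[OF d e sep]
    obtain c where c: "c \<in> C" "r (insert d (insert e (C - {c}))) = card C + 1"
      using exchange_element[OF d e ranks(2)] .
    have "\<exists>c\<in>C. three_connected (E - (C - {c}) - (D - {d})) (contr_rank r (C - {c}))"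
    proof (cases "3 \<le> card (C \<union> D)")
      case True
      interpret tangle_minor_exchange E r T \<theta> C D c d e
        using c d e True ranks card_rest_ge_four[OF True e(1)] by unfold_locales auto
      show ?thesis using three_connected_exchange c(1) by blast
    next
      case False
      then show ?thesis using small_case_exchange c(1) d by auto
    qed
    then show ?thesis ..
  qed simp
qed

end
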